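(* Let $A$ be a unital C*-algebra and $\varepsilon:A\to\mathbb{C}$ a character (nonzero multiplicative linear functional). Let $u$ be a non-zero bounded linear functional on $A$ such that $u(1)=0$ and $u(x^*x)\ge0$ for all $x\in A$ with $\varepsilon(x^*x)=0$. Then $u=r(v-\varepsilon)$ for some $r>0$ and some state $v$ on $A$. *)

theory Defs
  imports "HOL-Analysis.Analysis" "HOL-Library.Complex_Order"
begin

locale unital_cstar_algebra =
  fixes scaleC :: "complex \<Rightarrow> 'a::{banach, real_normed_algebra_1} \<Rightarrow> 'a"
    and star :: "'a \<Rightarrow> 'a"
  assumes scaleC_of_real: "\<And>r x. scaleC (complex_of_real r) x = scaleR r x"
    and scaleC_add_left: "\<And>a b x. scaleC (a + b) x = scaleC a x + scaleC b x"
    and scaleC_add_right: "\<And>a x y. scaleC a (x + y) = scaleC a x + scaleC a y"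
    and scaleC_scaleC: "\<And>a b x. scaleC a (scaleC b x) = scaleC (a * b) x"
    and scaleC_one: "\<And>x. scaleC 1 x = x"
    and norm_scaleC: "\<And>a x. norm (scaleC a x) = cmod a * norm x"
    and scaleC_mult_left: "\<And>a x y. scaleC a x * y = scaleC a (x * y)"
    and scaleC_mult_right: "\<And>a x y. x * scaleC a y = scaleC a (x * y)"
    and star_add: "\<And>x y. star (x + y) = star x + star y"
    and star_scaleC: "\<And>a x. star (scaleC a x) = scaleC (cnj a) (star x)"
    and star_mult: "\<And>x y. star (x * y) = star y * star x"
    and star_star: "\<And>x. star (star x) = x"
    and cstar_identity: "\<And>x. norm (star x * x) = norm x ^ 2"

definition clinear_functional ::
  "(complex \<Rightarrow> 'a \<Rightarrow> 'a::real_vector) \<Rightarrow> ('a \<Rightarrow> complex) \<Rightarrow> bool" where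
  "clinear_functional scaleC f \<longleftrightarrow>
     (\<forall>x y. f (x + y) = f x + f y) \<and> (\<forall>a x. f (scaleC a x) = a * f x)"

definition bounded_functional :: "('a::real_normed_vector \<Rightarrow> complex) \<Rightarrow> bool" where
  "bounded_functional f \<longleftrightarrow> (\<exists>K. \<forall>x. cmod (f x) \<le> K * norm x)"

definition character ::
  "(complex \<Rightarrow> 'a \<Rightarrow> 'a::{real_vector, times}) \<Rightarrow> ('a \<Rightarrow> complex) \<Rightarrow> bool" where
  "character scaleC f \<longleftrightarrow> clinear_functional scaleC f \<and>
     (\<forall>x y. f (x * y) = f x * f y) \<and> (\<exists>x. f x \<noteq> 0)"

definition cstar_state ::
  "(complex \<Rightarrow> 'a \<Rightarrow> 'a::{real_vector, monoid_mult}) \<Rightarrow> ('a \<Rightarrow> 'a) \<Rightarrow> ('a \<Rightarrow> complex) \<Rightarrow> bool" where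
  "cstar_state scaleC star v \<longleftrightarrow> clinear_functional scaleC v \<and>
     (\<forall>x. 0 \<le> v (star x * x)) \<and> v 1 = 1"

end

theory Submission
  imports Defs
begin

text \<open>
  Put \<open>r = K + 1\<close> for a bound \<open>K\<close> of \<open>u\<close> and \<open>v = \<epsilon> + u / r\<close>; only the positivity of \<open>v\<close>
  needs proof. Writing \<open>x = y + \<epsilon>(x) 1\<close> with \<open>y\<close> in the kernel \<open>J\<close> of \<open>\<epsilon>\<close> and using \<open>u(1) = 0\<close>,
  this reduces to two facts about \<open>y \<in> J\<close>: \<open>u(y\<^sup>*) = \<overline>u(y)\<close> and \<open>|u(y)|\<^sup>2 \<le> K u(y\<^sup>*y)\<close>.
  The form \<open>(a, b) \<mapsto> u(a\<^sup>*b)\<close> is positive on \<open>J\<close>, so both hold for \<open>u(f y)\<close> in place of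
  \<open>u(y)\<close> whenever \<open>f\<^sup>*\<close> lies in \<open>J\<close>. Continuity of \<open>u\<close> then finishes the argument, because
  \<open>J\<close> has an approximate unit: for \<open>h = y y\<^sup>*\<close> and \<open>t > 0\<close> the element \<open>f = h (h + i t)\<^sup>-\<^sup>1\<close>
  lies in \<open>J\<close>, has norm at most 1 and satisfies \<open>\<parallel>y - f y\<parallel>\<^sup>2 \<le> t / 2\<close>. Here \<open>h + i t\<close> is
  inverted by a Neumann series, and both estimates come from the fact that \<open>2 f - 1\<close> is the
  Cayley transform of \<open>h\<close>, hence unitary.
\<close>

lemma clinear_functional_add: "clinear_functional sc f \<Longrightarrow> f (x + y) = f x + f y"
  unfolding clinear_functional_def by blast

lemma clinear_functional_scale: "clinear_functional sc f \<Longrightarrow> f (sc a x) = a * f x"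
  unfolding clinear_functional_def by blast

lemma clinear_functional_zero: "clinear_functional sc f \<Longrightarrow> f 0 = 0"
  using clinear_functional_add[of sc f 0 0] by simp

lemma clinear_functional_minus: "clinear_functional sc f \<Longrightarrow> f (- x) = - f x"
  using clinear_functional_add[of sc f x "- x"] clinear_functional_zero[of sc f]
  by simp (metis add.inverse_unique)

lemma clinear_functional_diff: "clinear_functional sc f \<Longrightarrow> f (x - y) = f x - f y"
  using clinear_functional_add[of sc f x "- y"] clinear_functional_minus[of sc f y] by simp

lemma character_clinear: "character sc e \<Longrightarrow> clinear_functional sc e"
  unfolding character_def by blast

lemma character_mult: "character sc e \<Longrightarrow> e (x * y) = e x * e y"
  unfolding character_def by blast

lemma one_minus_invertible:
  fixes z :: "'a::{real_normed_algebra_1, banach}"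
  assumes "norm z < 1"
  shows "\<exists>w. (1 - z) * w = 1 \<and> w * (1 - z) = 1"
proof -
  have s: "summable (\<lambda>n. z ^ n)" by (rule complete_algebra_summable_geometric[OF assms])
  have t: "(\<lambda>n. z ^ n - z ^ Suc n) sums 1"
    using telescope_sums'[OF LIMSEQ_power_zero[OF assms]] by simp
  have "(\<lambda>n. (1 - z) * z ^ n) = (\<lambda>n. z ^ n - z ^ Suc n)"
    by (simp add: algebra_simps)
  then have "(1 - z) * suminf (\<lambda>n. z ^ n) = 1"
    using sums_mult[OF summable_sums[OF s], of "1 - z"] t sums_unique2 by metis
  moreover have "(\<lambda>n. z ^ n * (1 - z)) = (\<lambda>n. z ^ n - z ^ Suc n)"
    by (simp add: algebra_simps power_commutes)
  then have "suminf (\<lambda>n. z ^ n) * (1 - z) = 1"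
    using sums_mult2[OF summable_sums[OF s], of "1 - z"] t sums_unique2 by metis
  ultimately show ?thesis by blast
qed

lemma commute_with_inverse:
  fixes X R h :: "'a::monoid_mult"
  assumes "X * R = 1" "R * X = 1" "h * X = X * h"
  shows "h * R = R * h"
proof -
  have "R * h = R * h * (X * R)" using assms(1) by simp
  also have "\<dots> = R * (h * X) * R" by (simp add: mult.assoc)
  also have "\<dots> = R * (X * h) * R" using assms(3) by simp
  also have "\<dots> = (R * X) * h * R" by (simp add: mult.assoc)
  finally show ?thesis using assms(2) by simp
qed

text \<open>The discriminant argument of the Cauchy--Schwarz inequality, for \<open>G = |\<langle>a, b\<rangle>|\<^sup>2\<close>.\<close>

lemma le_mult_if_quadratic_nonneg:
  fixes \<alpha> \<beta> G :: real
  assumes "0 \<le> \<beta>" "0 \<le> G" and quadratic: "\<And>t. 0 \<le> \<alpha> - 2 * t * G + t\<^sup>2 * G * \<beta>"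
  shows "G \<le> \<alpha> * \<beta>"
proof (cases "\<beta> = 0")
  case True
  have "G = 0"
  proof (rule ccontr)
    assume "G \<noteq> 0"
    then show False
      using quadratic[of "(\<alpha> + 1) / (2 * G)"] True by simp
  qed
  then show ?thesis using True by simp
next
  case False
  then have "0 < \<beta>" using assms(1) by simp
  moreover have "0 \<le> \<alpha> - 2 * (1 / \<beta>) * G + (1 / \<beta>)\<^sup>2 * G * \<beta>" by (rule quadratic)
  ultimately show ?thesis by (simp add: power2_eq_square field_simps)
qed

lemma le_if_le_plus_multiple:
  fixes a b C :: real
  assumes "0 \<le> C" and le: "\<And>\<delta>. 0 < \<delta> \<Longrightarrow> a \<le> b + C * \<delta>"
  shows "a \<le> b"
proof (rule field_le_epsilon)
  fix e :: real
  assume "0 < e"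
  then have "a \<le> b + C * (e / (C + 1))"
    using le[of "e / (C + 1)"] assms(1) by simp
  also have "C * (e / (C + 1)) \<le> e"
    using \<open>0 < e\<close> assms(1) by (simp add: field_simps)
  finally show "a \<le> b + e" by simp
qed

lemma nonneg_add_cross_term:
  fixes l w :: complex and q K r :: real
  assumes "cmod w ^ 2 \<le> K * q" "0 \<le> q" "K \<le> r" "0 < r"
  shows "0 \<le> cmod l ^ 2 + (q + 2 * Re (cnj l * w)) / r"
proof -
  have "- Re (cnj l * w) \<le> cmod l * cmod w"
    using abs_Re_le_cmod[of "cnj l * w"] by (simp add: norm_mult)
  moreover have "r * (r * cmod l ^ 2 + q - 2 * cmod l * cmod w)
      = (r * cmod l - cmod w)\<^sup>2 + (r * q - cmod w ^ 2)"
    by (simp add: power2_eq_square algebra_simps)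
  moreover have "cmod w ^ 2 \<le> r * q"
    using assms(1-3) mult_right_mono[of K r q] by linarith
  ultimately have "0 \<le> r * (r * cmod l ^ 2 + q - 2 * cmod l * cmod w)"
    by simp
  then have "0 \<le> r * cmod l ^ 2 + q - 2 * cmod l * cmod w"
    using \<open>0 < r\<close> by (simp add: zero_le_mult_iff)
  then have "0 \<le> r * cmod l ^ 2 + q + 2 * Re (cnj l * w)"
    using \<open>- Re (cnj l * w) \<le> cmod l * cmod w\<close> by linarith
  then show ?thesis using \<open>0 < r\<close> by (simp add: field_simps)
qed

context unital_cstar_algebra
begin

lemma scaleC_zero_right [simp]: "scaleC a 0 = 0"
  using scaleC_add_right[of a 0 0] by simp

lemma scaleC_zero_left [simp]: "scaleC 0 x = 0"
  using scaleC_of_real[of 0 x] by simp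

lemma scaleC_minus_left: "scaleC (- a) x = - scaleC a x"
  using scaleC_add_left[of a "- a" x] by simp (metis add.inverse_unique)

lemma scaleC_minus_right: "scaleC a (- x) = - scaleC a x"
  using scaleC_add_right[of a x "- x"] by simp (metis add.inverse_unique)

lemma scaleC_diff_right: "scaleC a (x - y) = scaleC a x - scaleC a y"
  using scaleC_add_right[of a x "- y"] by (simp add: scaleC_minus_right)

lemma scaleC_mult_scaleC: "scaleC a x * scaleC b y = scaleC (a * b) (x * y)"
  by (simp add: scaleC_mult_left scaleC_mult_right scaleC_scaleC mult.commute)

lemma scaleC_one_commute: "scaleC a 1 * x = x * scaleC a 1"
  by (simp add: scaleC_mult_left scaleC_mult_right)

lemma star_zero [simp]: "star 0 = 0"
  using star_add[of 0 0] by simp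

lemma star_minus: "star (- x) = - star x"
  using star_add[of x "- x"] by simp (metis add.inverse_unique)

lemma star_diff: "star (x - y) = star x - star y"
  using star_add[of x "- y"] by (simp add: star_minus)

lemma star_one [simp]: "star 1 = 1"
  using star_mult[of "star 1" 1] by (simp add: star_star)

lemma star_scaleR: "star (r *\<^sub>R x) = r *\<^sub>R star x"
  using star_scaleC[of "of_real r" x] by (simp add: scaleC_of_real)

lemma norm_star [simp]: "norm (star x) = norm x"
proof -
  have "norm y \<le> norm (star y)" for y
  proof (cases "y = 0")
    case False
    have "norm y * norm y = norm (star y * y)"
      by (simp add: cstar_identity power2_eq_square)
    also have "\<dots> \<le> norm (star y) * norm y" by (rule norm_mult_ineq)
    finally show ?thesis using False by simp
  qed simp
  from this[of x] this[of "star x"] show ?thesis by (simp add: star_star)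
qed

lemma norm_eq_one_if_isometry:
  assumes "star U * U = 1"
  shows "norm U = 1"
  using cstar_identity[of U] assms norm_ge_zero[of U] by (simp add: power2_eq_1_iff)

lemma star_mult_self_expand:
  "star (a + scaleC c b) * (a + scaleC c b) =
     star a * a + scaleC c (star a * b) + scaleC (cnj c) (star b * a) + scaleC (cnj c * c) (star b * b)"
  by (simp add: star_add star_scaleC distrib_left distrib_right scaleC_mult_left scaleC_mult_right
      scaleC_scaleC add.assoc scaleC_add_right mult.commute[of c "cnj c"])

lemma clinear_functional_star_mult_self:
  assumes "clinear_functional scaleC u"
  shows "u (star (a + scaleC c b) * (a + scaleC c b)) =
     u (star a * a) + c * u (star a * b) + cnj c * u (star b * a) + (cnj c * c) * u (star b * b)"
  unfolding star_mult_self_expand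
  using clinear_functional_add[OF assms] clinear_functional_scale[OF assms] by simp

lemma norm_selfadjoint_plus_imaginary:
  assumes "star h = h"
  shows "norm (h + scaleC (\<i> * of_real s) 1) ^ 2 \<le> norm h ^ 2 + s\<^sup>2"
proof -
  have "cnj (\<i> * of_real s) * (\<i> * of_real s) = of_real (s\<^sup>2)"
    by (simp add: complex_eq_iff power2_eq_square)
  then have "norm (h + scaleC (\<i> * of_real s) 1) ^ 2 = norm (h * h + scaleC (of_real (s\<^sup>2)) 1)"
    using cstar_identity[of "h + scaleC (\<i> * of_real s) 1"]
      star_mult_self_expand[of h "\<i> * of_real s" 1] assms
    by (simp add: scaleC_add_left scaleC_minus_left add.assoc)
  also have "\<dots> \<le> norm (h * h) + norm (scaleC (of_real (s\<^sup>2)) 1)" by (rule norm_triangle_ineq)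
  also have "\<dots> = norm h ^ 2 + s\<^sup>2"
    using cstar_identity[of h] assms by (simp add: norm_scaleC norm_power)
  finally show ?thesis .
qed

text \<open>
  \<open>h + i t\<close> is a nonzero multiple of \<open>1 - z\<close> with \<open>\<parallel>z\<parallel> < 1\<close>, namely \<open>z = (h + i s) / c\<close>
  for \<open>c = i (s - t)\<close>; the shift \<open>s\<close> is chosen so that \<open>\<parallel>h + i s\<parallel> < |s - t|\<close>.
\<close>

lemma selfadjoint_plus_imaginary_invertible:
  assumes "star h = h" "t \<noteq> 0"
  shows "\<exists>R. (h + scaleC (\<i> * of_real t) 1) * R = 1 \<and> R * (h + scaleC (\<i> * of_real t) 1) = 1"
proof -
  define s where "s = - (norm h ^ 2 + 1) / (2 * t)"
  define a where "a = h + scaleC (\<i> * of_real s) 1"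
  define c where "c = \<i> * of_real (s - t)"
  define z where "z = scaleC (1 / c) a"
  have "2 * s * t = - (norm h ^ 2 + 1)"
    unfolding s_def using assms(2) by (simp add: field_simps)
  then have "(s - t)\<^sup>2 = s\<^sup>2 + norm h ^ 2 + 1 + t\<^sup>2"
    by (simp add: power2_eq_square algebra_simps)
  then have "norm a ^ 2 < \<bar>s - t\<bar>\<^sup>2"
    using norm_selfadjoint_plus_imaginary[OF assms(1), of s] zero_le_power2[of t]
    unfolding a_def power2_abs by linarith
  then have less: "norm a < cmod c"
    unfolding c_def by (simp add: norm_mult power2_less_imp_less del: of_real_diff)
  then have "c \<noteq> 0" by auto
  have "norm z < 1"
    unfolding z_def using less \<open>c \<noteq> 0\<close> by (simp add: norm_scaleC norm_divide divide_less_eq)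
  then obtain w where w: "(1 - z) * w = 1" "w * (1 - z) = 1"
    using one_minus_invertible by blast
  have "scaleC (\<i> * of_real s) 1 = scaleC (\<i> * of_real t) 1 + scaleC c 1"
    unfolding c_def scaleC_add_left[symmetric] by (simp add: algebra_simps)
  then have "h + scaleC (\<i> * of_real t) 1 = scaleC (- c) (1 - z)"
    using \<open>c \<noteq> 0\<close> unfolding z_def a_def
    by (simp add: scaleC_diff_right scaleC_scaleC scaleC_one scaleC_minus_left scaleC_minus_right
        scaleC_add_right)
  then show ?thesis
    using \<open>c \<noteq> 0\<close> w
    by (intro exI[of _ "scaleC (- 1 / c) w"]) (simp add: scaleC_mult_scaleC scaleC_one)
qed

lemma character_one:
  assumes "character scaleC e"
  shows "e 1 = 1"
proof -
  from assms obtain x where "e x \<noteq> 0" "e (1 * x) = e 1 * e x"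
    unfolding character_def by blast
  then show ?thesis by simp
qed

lemma norm_character_le:
  assumes "character scaleC e"
  shows "cmod (e z) \<le> norm z"
proof (rule ccontr)
  assume "\<not> cmod (e z) \<le> norm z"
  then have less: "norm z < cmod (e z)" by simp
  define w where "w = scaleC (1 / e z) z"
  have "norm w < 1"
    unfolding w_def using less by (simp add: norm_scaleC norm_divide divide_less_eq mult.commute)
  then obtain R where R: "(1 - w) * R = 1" using one_minus_invertible by blast
  have "e w = 1"
    unfolding w_def using clinear_functional_scale[OF character_clinear[OF assms]] less by auto
  then have "e ((1 - w) * R) = 0"
    using character_mult[OF assms] clinear_functional_diff[OF character_clinear[OF assms]]
      character_one[OF assms] by simp
  then show False using R character_one[OF assms] by simp
qed

lemma character_selfadjoint_real:
  assumes "character scaleC e" "star h = h"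
  shows "Im (e h) = 0"
proof (rule ccontr)
  assume "Im (e h) \<noteq> 0"
  note lin = character_clinear[OF assms(1)]
  define s where "s = (norm h ^ 2 + 1) / (2 * Im (e h))"
  have "e (h + scaleC (\<i> * of_real s) 1) = e h + \<i> * of_real s"
    using clinear_functional_add[OF lin] clinear_functional_scale[OF lin] character_one[OF assms(1)]
    by simp
  then have "cmod (e h + \<i> * of_real s) ^ 2 \<le> norm (h + scaleC (\<i> * of_real s) 1) ^ 2"
    using norm_character_le[OF assms(1), of "h + scaleC (\<i> * of_real s) 1"] by (simp add: power_mono)
  also have "\<dots> \<le> norm h ^ 2 + s\<^sup>2" by (rule norm_selfadjoint_plus_imaginary[OF assms(2)])
  finally have "(Re (e h))\<^sup>2 + (Im (e h) + s)\<^sup>2 \<le> norm h ^ 2 + s\<^sup>2"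
    unfolding cmod_power2 by simp
  moreover have "2 * Im (e h) * s = norm h ^ 2 + 1"
    unfolding s_def using \<open>Im (e h) \<noteq> 0\<close> by simp
  ultimately have "(Re (e h))\<^sup>2 + (Im (e h))\<^sup>2 + 1 \<le> 0"
    by (simp add: power2_eq_square algebra_simps)
  then show False
    using zero_le_power2[of "Re (e h)"] zero_le_power2[of "Im (e h)"] by linarith
qed

lemma character_star:
  assumes "character scaleC e"
  shows "e (star x) = cnj (e x)"
proof -
  note lin = character_clinear[OF assms]
  have "star (x + star x) = x + star x"
    by (simp add: star_add star_star add.commute)
  then have "Im (e x) + Im (e (star x)) = 0"
    using character_selfadjoint_real[OF assms] clinear_functional_add[OF lin] by force
  moreover have "star (scaleC \<i> (x - star x)) = scaleC \<i> (x - star x)"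
    by (simp add: star_scaleC star_diff star_star scaleC_minus_left scaleC_minus_right[symmetric])
  then have "Re (e x) - Re (e (star x)) = 0"
    using character_selfadjoint_real[OF assms] clinear_functional_scale[OF lin]
      clinear_functional_diff[OF lin] by force
  ultimately show ?thesis by (simp add: complex_eq_iff)
qed

lemma cayley_transform_unitary:
  assumes "star h = h" "star k = - k" "h * k = k * h"
    and R: "(h + k) * R = 1" "R * (h + k) = 1"
  shows "star ((h - k) * R) * ((h - k) * R) = 1" and "((h - k) * R) * star ((h - k) * R) = 1"
proof -
  have star_R: "(h - k) * star R = 1" "star R * (h - k) = 1"
    using arg_cong[OF R(2), of star] arg_cong[OF R(1), of star] assms(1,2)
    by (simp_all add: star_mult star_add)
  have normal: "(h - k) * (h + k) = (h + k) * (h - k)"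
    using assms(3) by (simp add: algebra_simps)
  then have "(h - k) * R = R * (h - k)"
    using commute_with_inverse[OF R] by blast
  then have "star ((h - k) * R) = star (R * (h - k))" by simp
  then have commute: "(h + k) * star R = star R * (h + k)"
    using assms(1,2) by (simp add: star_mult star_diff)
  have "star ((h - k) * R) * ((h - k) * R) = star R * (h + k) * (h - k) * R"
    using assms(1,2) by (simp add: star_mult star_diff mult.assoc)
  also have "\<dots> = star R * (h - k) * ((h + k) * R)"
    by (metis normal mult.assoc)
  finally show "star ((h - k) * R) * ((h - k) * R) = 1"
    using R star_R by simp
  have "((h - k) * R) * star ((h - k) * R) = (h - k) * (R * (h + k)) * star R"
    using assms(1,2) commute by (simp add: star_mult star_diff mult.assoc)
  then show "((h - k) * R) * star ((h - k) * R) = 1"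
    using R star_R by simp
qed

lemma selfadjoint_resolvent_norms:
  assumes "star h = h" "0 < t"
    and R: "(h + scaleC (\<i> * of_real t) 1) * R = 1" "R * (h + scaleC (\<i> * of_real t) 1) = 1"
  shows "norm (h * R) \<le> 1" and "t * norm (h * R * star R) \<le> 1 / 2"
proof -
  define k where "k = scaleC (\<i> * of_real t) 1"
  define f where "f = h * R"
  define C where "C = (h - k) * R"
  have skew: "star k = - k"
    unfolding k_def by (simp add: star_scaleC scaleC_minus_left)
  have "h * k = k * h"
    unfolding k_def by (rule scaleC_one_commute[symmetric])
  then have unitary: "star C * C = 1" "C * star C = 1"
    using cayley_transform_unitary[OF assms(1) skew _ R[folded k_def]]
    unfolding C_def by auto
  have one_minus_f: "1 - f = k * R"
    using R(1) unfolding f_def k_def[symmetric] by (simp add: algebra_simps)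
  have C_eq: "C = 2 *\<^sub>R f - 1"
    using one_minus_f unfolding C_def f_def by (simp add: algebra_simps scaleR_2)
  show "norm (h * R) \<le> 1"
    using norm_triangle_ineq[of C 1] norm_eq_one_if_isometry[OF unitary(1)]
    unfolding C_eq f_def by simp
  have "star f = 1 + star R * k"
    using arg_cong[OF one_minus_f, of star] skew by (simp add: star_diff star_mult algebra_simps)
  then have "f * star R * k = f * star f - f"
    by (simp add: algebra_simps mult.assoc)
  also have "\<dots> = (1 / 4) *\<^sub>R (star C - C)"
  proof -
    have "4 *\<^sub>R (f * star f - f) = star C - C"
      using unitary(2) unfolding C_eq
      by (simp add: star_diff star_scaleR algebra_simps) (simp flip: scaleR_left_distrib)
    from arg_cong[OF this, of "scaleR (1 / 4)"] show ?thesis by simp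
  qed
  finally have "scaleC (\<i> * of_real t) (f * star R) = (1 / 4) *\<^sub>R (star C - C)"
    unfolding k_def by (simp add: scaleC_mult_right)
  from arg_cong[OF this, of norm] have "t * norm (f * star R) = norm (star C - C) / 4"
    using \<open>0 < t\<close> by (simp add: norm_scaleC norm_mult)
  moreover have "norm (star C - C) \<le> 2"
    using norm_triangle_ineq4[of "star C" C] norm_eq_one_if_isometry[OF unitary(1)]
      norm_eq_one_if_isometry[of "star C"] unitary(2) by (simp add: star_star)
  ultimately show "t * norm (h * R * star R) \<le> 1 / 2"
    unfolding f_def by simp
qed

lemma selfadjoint_resolvent_defect:
  assumes R: "(h + scaleC (\<i> * of_real t) 1) * R = 1" "R * (h + scaleC (\<i> * of_real t) 1) = 1"
  shows "(1 - h * R) * h * star (1 - h * R) = scaleC (of_real (t\<^sup>2)) (h * R * star R)"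
proof -
  define k where "k = scaleC (\<i> * of_real t) 1"
  have central: "k * x = x * k" for x
    unfolding k_def by (rule scaleC_one_commute)
  have "R * h = h * R"
    using commute_with_inverse[OF R, of h] central[of h] unfolding k_def[symmetric]
    by (simp add: algebra_simps)
  have "1 - h * R = k * R"
    using R(1) unfolding k_def[symmetric] by (simp add: algebra_simps)
  then have "(1 - h * R) * h * star (1 - h * R) = - (k * (R * h * star R) * k)"
    unfolding k_def by (simp add: star_mult star_scaleC scaleC_minus_left mult.assoc)
  also have "\<dots> = - (k * k) * (h * R * star R)"
    using \<open>R * h = h * R\<close> by (metis central minus_mult_left mult.assoc)
  also have "- (k * k) = scaleC (of_real (t\<^sup>2)) 1"
  proof -
    have "- (\<i> * of_real t * (\<i> * of_real t)) = complex_of_real (t\<^sup>2)"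
      by (simp add: complex_eq_iff power2_eq_square)
    then show ?thesis
      unfolding k_def scaleC_mult_scaleC by (simp add: scaleC_minus_left[symmetric])
  qed
  finally show ?thesis
    by (simp add: scaleC_mult_left)
qed

lemma approximate_unit_in_kernel:
  assumes "character scaleC e" "e y = 0" "0 < \<delta>"
  shows "\<exists>f. e f = 0 \<and> e (star f) = 0 \<and> norm f \<le> 1 \<and> norm (y - f * y) \<le> \<delta>"
proof -
  note mult = character_mult[OF assms(1)]
  define h where "h = y * star y"
  have "star h = h"
    unfolding h_def by (simp add: star_mult star_star)
  obtain R where R: "(h + scaleC (\<i> * of_real (\<delta>\<^sup>2)) 1) * R = 1"
    "R * (h + scaleC (\<i> * of_real (\<delta>\<^sup>2)) 1) = 1"
    using selfadjoint_plus_imaginary_invertible[OF \<open>star h = h\<close>, of "\<delta>\<^sup>2"] \<open>0 < \<delta>\<close> by auto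
  have "norm (y - h * R * y) ^ 2 = norm (star (star ((1 - h * R) * y)) * star ((1 - h * R) * y))"
    unfolding cstar_identity by (simp add: algebra_simps)
  also have "\<dots> = norm ((1 - h * R) * h * star (1 - h * R))"
    unfolding h_def by (simp add: star_star star_mult mult.assoc)
  also have "\<dots> = \<delta>\<^sup>2 * (\<delta>\<^sup>2 * norm (h * R * star R))"
    unfolding selfadjoint_resolvent_defect[OF R] norm_scaleC norm_of_real
    by (simp add: power2_eq_square)
  also have "\<dots> \<le> \<delta>\<^sup>2 * (1 / 2)"
    using selfadjoint_resolvent_norms(2)[OF \<open>star h = h\<close> _ R] \<open>0 < \<delta>\<close>
    by (intro mult_left_mono) simp_all
  also have "\<dots> \<le> \<delta>\<^sup>2"
    by simp
  finally have "norm (y - h * R * y) \<le> \<delta>"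
    using power2_le_imp_le \<open>0 < \<delta>\<close> by force
  moreover have "e h = 0" "e (star h) = 0"
    unfolding \<open>star h = h\<close> unfolding h_def using mult assms(2) by simp_all
  ultimately show ?thesis
    using selfadjoint_resolvent_norms(1)[OF \<open>star h = h\<close> _ R] \<open>0 < \<delta>\<close> mult
    by (intro exI[of _ "h * R"]) (simp add: star_mult)
qed

end

locale kernel_positive_functional = unital_cstar_algebra +
  fixes \<epsilon> u :: "'a::{banach, real_normed_algebra_1} \<Rightarrow> complex"
  assumes character: "character scaleC \<epsilon>"
    and clinear_u: "clinear_functional scaleC u"
    and nonneg_if_kernel: "\<And>x. \<epsilon> (star x * x) = 0 \<Longrightarrow> 0 \<le> u (star x * x)"
begin

lemmas clinear_character = character_clinear[OF character]

lemma kernel_add_scaleC: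
  assumes "\<epsilon> a = 0" "\<epsilon> b = 0"
  shows "\<epsilon> (a + scaleC c b) = 0"
  using assms clinear_functional_add[OF clinear_character]
    clinear_functional_scale[OF clinear_character] by simp

lemma nonneg_on_kernel:
  assumes "\<epsilon> a = 0"
  shows "0 \<le> u (star a * a)"
  using assms nonneg_if_kernel character_mult[OF character] by simp

lemma Im_on_kernel:
  assumes "\<epsilon> a = 0"
  shows "Im (u (star a * a)) = 0"
  using nonneg_on_kernel[OF assms] by (simp add: less_eq_complex_def)

lemma hermitian_on_kernel:
  assumes "\<epsilon> a = 0" "\<epsilon> b = 0"
  shows "u (star b * a) = cnj (u (star a * b))"
proof -
  have "0 \<le> u (star (a + scaleC c b) * (a + scaleC c b))" for c
    using nonneg_on_kernel kernel_add_scaleC assms by blast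
  from this[of 1] this[of \<i>] nonneg_on_kernel[OF assms(1)] nonneg_on_kernel[OF assms(2)]
  have "Im (u (star a * b)) + Im (u (star b * a)) = 0"
    and "Re (u (star a * b)) - Re (u (star b * a)) = 0"
    unfolding clinear_functional_star_mult_self[OF clinear_u] by (simp_all add: less_eq_complex_def)
  then show ?thesis by (simp add: complex_eq_iff)
qed

lemma cauchy_schwarz_on_kernel:
  assumes "\<epsilon> a = 0" "\<epsilon> b = 0"
  shows "cmod (u (star a * b)) ^ 2 \<le> Re (u (star a * a)) * Re (u (star b * b))"
proof (rule le_mult_if_quadratic_nonneg)
  show "0 \<le> Re (u (star b * b))"
    using nonneg_on_kernel[OF assms(2)] by (simp add: less_eq_complex_def)
  show "0 \<le> Re (u (star a * a)) - 2 * t * cmod (u (star a * b)) ^ 2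
      + t\<^sup>2 * cmod (u (star a * b)) ^ 2 * Re (u (star b * b))" for t
  proof -
    define c where "c = - of_real t * cnj (u (star a * b))"
    have "0 \<le> u (star (a + scaleC c b) * (a + scaleC c b))"
      using nonneg_on_kernel kernel_add_scaleC assms by blast
    then show ?thesis
      unfolding clinear_functional_star_mult_self[OF clinear_u] hermitian_on_kernel[OF assms] cmod_power2
      using Im_on_kernel[OF assms(2)]
      by (simp add: less_eq_complex_def c_def algebra_simps power2_eq_square)
  qed
qed simp

end

locale bounded_kernel_positive_functional = kernel_positive_functional +
  fixes K :: real
  assumes bound_nonneg: "0 \<le> K"
    and bounded: "\<And>x. cmod (u x) \<le> K * norm x"
begin

lemma norm_diff_le_approximate_unit:
  assumes "norm (y - f * y) \<le> \<delta>"
  shows "cmod (u y - u (f * y)) \<le> K * \<delta>"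
  using bounded[of "y - f * y"] mult_left_mono[OF assms bound_nonneg]
  by (simp add: clinear_functional_diff[OF clinear_u])

lemma norm_square_le_on_kernel:
  assumes "\<epsilon> y = 0"
  shows "cmod (u y) ^ 2 \<le> K * Re (u (star y * y))"
proof -
  define q where "q = Re (u (star y * y))"
  have "0 \<le> q"
    using nonneg_on_kernel[OF assms] unfolding q_def by (simp add: less_eq_complex_def)
  have approx: "cmod (u y) \<le> sqrt (K * q) + K * \<delta>" if "0 < \<delta>" for \<delta>
  proof -
    obtain f where f: "\<epsilon> f = 0" "\<epsilon> (star f) = 0" "norm f \<le> 1" "norm (y - f * y) \<le> \<delta>"
      using approximate_unit_in_kernel[OF character assms \<open>0 < \<delta>\<close>] by blast
    have "norm (f * star f) \<le> 1"
      using norm_mult_ineq[of f "star f"] f(3) mult_le_one[OF f(3) _ f(3)] by simp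
    then have "Re (u (f * star f)) \<le> K"
      using complex_Re_le_cmod[of "u (f * star f)"] bounded[of "f * star f"]
        mult_left_mono[OF _ bound_nonneg] by fastforce
    moreover have "0 \<le> Re (u (f * star f))"
      using nonneg_on_kernel[OF f(2)] by (simp add: less_eq_complex_def star_star)
    ultimately have "cmod (u (f * y)) ^ 2 \<le> K * q"
      using cauchy_schwarz_on_kernel[OF f(2) assms] mult_right_mono[OF _ \<open>0 \<le> q\<close>]
      unfolding q_def star_star by fastforce
    then have "cmod (u (f * y)) \<le> sqrt (K * q)"
      by (rule real_le_rsqrt)
    then show ?thesis
      using norm_diff_le_approximate_unit[OF f(4)] norm_triangle_ineq2[of "u y" "u (f * y)"]
      by linarith
  qed
  have "cmod (u y) \<le> sqrt (K * q)"
    by (rule le_if_le_plus_multiple[OF bound_nonneg approx])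
  then have "cmod (u y) ^ 2 \<le> sqrt (K * q) ^ 2"
    by (simp add: power_mono)
  then show ?thesis
    using bound_nonneg \<open>0 \<le> q\<close> unfolding q_def by simp
qed

lemma star_on_kernel:
  assumes "\<epsilon> y = 0"
  shows "u (star y) = cnj (u y)"
proof -
  have approx: "cmod (u (star y) - cnj (u y)) \<le> 0 + (2 * K) * \<delta>" if "0 < \<delta>" for \<delta>
  proof -
    obtain f where f: "\<epsilon> (star f) = 0" "norm (y - f * y) \<le> \<delta>"
      using approximate_unit_in_kernel[OF character assms \<open>0 < \<delta>\<close>] by blast
    have "u (star y * star f) = cnj (u (f * y))"
      using hermitian_on_kernel[OF assms f(1)] by (simp add: star_star)
    then have "u (star (y - f * y)) = u (star y) - cnj (u (f * y))"
      by (simp add: clinear_functional_diff[OF clinear_u] star_diff star_mult)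
    moreover have "u (y - f * y) = u y - u (f * y)"
      by (rule clinear_functional_diff[OF clinear_u])
    ultimately have "u (star y) - cnj (u y) = u (star (y - f * y)) - cnj (u (y - f * y))"
      by simp
    then have "cmod (u (star y) - cnj (u y)) \<le> cmod (u (star (y - f * y))) + cmod (u (y - f * y))"
      using norm_triangle_ineq4[of "u (star (y - f * y))" "cnj (u (y - f * y))"] by simp
    also have "\<dots> \<le> 2 * K * \<delta>"
    proof -
      have "cmod (u (star (y - f * y))) \<le> K * \<delta>"
        using bounded[of "star (y - f * y)"] mult_left_mono[OF f(2) bound_nonneg] by simp
      moreover have "cmod (u (y - f * y)) \<le> K * \<delta>"
        using norm_diff_le_approximate_unit[OF f(2)] by (simp add: clinear_functional_diff[OF clinear_u])
      ultimately show ?thesis by linarith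
    qed
    finally show ?thesis by simp
  qed
  have "cmod (u (star y) - cnj (u y)) \<le> 0"
    using le_if_le_plus_multiple[OF _ approx] bound_nonneg by simp
  then show ?thesis by simp
qed

lemma nonneg_character_plus_scaled:
  assumes "u 1 = 0" "K \<le> r" "0 < r"
  shows "0 \<le> \<epsilon> (star x * x) + u (star x * x) / of_real r"
proof -
  define l where "l = \<epsilon> x"
  define y where "y = x - scaleC l 1"
  have "\<epsilon> y = 0"
    unfolding y_def l_def using character_one[OF character]
    by (simp add: clinear_functional_diff[OF clinear_character]
        clinear_functional_scale[OF clinear_character])
  have x: "x = y + scaleC l 1"
    unfolding y_def by simp
  have "\<epsilon> (star x * x) = cnj l * l"
    using character_mult[OF character] character_star[OF character] unfolding l_def by simp
  then have "\<epsilon> (star x * x) = of_real (cmod l ^ 2)"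
    by (metis complex_norm_square mult.commute)
  moreover have "u (star x * x) = of_real (Re (u (star y * y))) + cnj (cnj l * u y) + cnj l * u y"
    using star_on_kernel[OF \<open>\<epsilon> y = 0\<close>] Im_on_kernel[OF \<open>\<epsilon> y = 0\<close>] \<open>u 1 = 0\<close>
    unfolding x clinear_functional_star_mult_self[OF clinear_u]
    by (simp add: complex_eq_iff)
  ultimately have "\<epsilon> (star x * x) + u (star x * x) / of_real r
      = of_real (cmod l ^ 2 + (Re (u (star y * y)) + 2 * Re (cnj l * u y)) / r)"
    by (simp add: complex_eq_iff add_divide_distrib)
  moreover have "0 \<le> cmod l ^ 2 + (Re (u (star y * y)) + 2 * Re (cnj l * u y)) / r"
    using nonneg_add_cross_term[OF norm_square_le_on_kernel[OF \<open>\<epsilon> y = 0\<close>] _ assms(2,3)]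
      nonneg_on_kernel[OF \<open>\<epsilon> y = 0\<close>] by (simp add: less_eq_complex_def)
  ultimately show ?thesis
    by (simp add: less_eq_complex_def)
qed

lemma cstar_state_character_plus_scaled:
  assumes "u 1 = 0" "K \<le> r" "0 < r"
  shows "cstar_state scaleC star (\<lambda>x. \<epsilon> x + u x / of_real r)"
  unfolding cstar_state_def clinear_functional_def
  using clinear_functional_add[OF clinear_character] clinear_functional_add[OF clinear_u]
    clinear_functional_scale[OF clinear_character] clinear_functional_scale[OF clinear_u]
    character_one[OF character] nonneg_character_plus_scaled[OF assms]
  by (simp add: \<open>u 1 = 0\<close> algebra_simps add_divide_distrib)

end

theorem proposition3p2:
  fixes scaleC :: "complex \<Rightarrow> 'a::{banach, real_normed_algebra_1} \<Rightarrow> 'a"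
    and star :: "'a \<Rightarrow> 'a"
    and \<epsilon> u :: "'a \<Rightarrow> complex"
  assumes "unital_cstar_algebra scaleC star"
    and "character scaleC \<epsilon>"
    and "clinear_functional scaleC u" and "bounded_functional u"
    and "\<exists>x. u x \<noteq> 0"
    and "u 1 = 0"
    and "\<And>x. \<epsilon> (star x * x) = 0 \<Longrightarrow> 0 \<le> u (star x * x)"
  shows "\<exists>r::real. r > 0 \<and> (\<exists>v. cstar_state scaleC star v \<and>
           (\<forall>x. u x = complex_of_real r * (v x - \<epsilon> x)))"
proof -
  obtain K0 where bound: "\<And>x. cmod (u x) \<le> K0 * norm x"
    using assms(4) unfolding bounded_functional_def by blast
  define K where "K = max K0 0"
  have "cmod (u x) \<le> K * norm x" for x
    using bound[of x] mult_right_mono[of K0 K "norm x"] unfolding K_def by force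
  then interpret bounded_kernel_positive_functional scaleC star \<epsilon> u K
    using assms unfolding K_def
    by (intro bounded_kernel_positive_functional.intro kernel_positive_functional.intro
        kernel_positive_functional_axioms.intro bounded_kernel_positive_functional_axioms.intro) auto
  have "cstar_state scaleC star (\<lambda>x. \<epsilon> x + u x / of_real (K + 1))"
    using cstar_state_character_plus_scaled[OF \<open>u 1 = 0\<close>, of "K + 1"] bound_nonneg by simp
  moreover have "u x = of_real (K + 1) * (\<epsilon> x + u x / of_real (K + 1) - \<epsilon> x)" for x
    using bound_nonneg by (simp add: complex_eq_iff)
  ultimately show ?thesis
    using bound_nonneg by (intro exI[of _ "K + 1"]) auto
qed

end
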